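(* Let $A$ be a binary $n\times m$ matrix that has no two identical rows, and suppose $A$ has a binary base $\{u_1,\dots,u_d\}$ that is disjoint in rows. Then $\{u_1,\dots,u_d\}$ spans (in the binary sense) every other binary base of $A$.
   Context: A set $X$ of $\{0,1\}$-vectors spans a vector $y$ (binary sense) if $y=\sum_{x\in X}c_xx$ with $c_x\in\{0,1\}$ and ordinary addition; it spans a set $Y$ if it spans each vector of $Y$. A binary base of $A$ is a set of $\{0,1\}$ column vectors of length $n$ spanning every column of $A$, of minimum cardinality among such spanning sets. A base is disjoint in rows if no two distinct vectors of it have a $1$ in the same coordinate. *)

theory Defs
  imports Main
begin

text \<open>A {0,1}-vector of length n is modelled as a function nat => nat with
  values in {0,1} on indices i < n and value 0 at indices i >= n.
  A binary n x m matrix is a function nat => nat => nat (row, column) with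
  entries in {0,1} for i < n, j < m.\<close>

definition binvec :: "nat \<Rightarrow> (nat \<Rightarrow> nat) \<Rightarrow> bool" where
  "binvec n v \<longleftrightarrow> (\<forall>i<n. v i \<in> {0,1}) \<and> (\<forall>i\<ge>n. v i = 0)"

definition binary_matrix :: "nat \<Rightarrow> nat \<Rightarrow> (nat \<Rightarrow> nat \<Rightarrow> nat) \<Rightarrow> bool" where
  "binary_matrix n m A \<longleftrightarrow> (\<forall>i<n. \<forall>j<m. A i j \<in> {0,1})"

definition distinct_rows :: "nat \<Rightarrow> nat \<Rightarrow> (nat \<Rightarrow> nat \<Rightarrow> nat) \<Rightarrow> bool" where
  "distinct_rows n m A \<longleftrightarrow> (\<forall>i<n. \<forall>i'<n. i \<noteq> i' \<longrightarrow> (\<exists>j<m. A i j \<noteq> A i' j))"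

definition col :: "nat \<Rightarrow> (nat \<Rightarrow> nat \<Rightarrow> nat) \<Rightarrow> nat \<Rightarrow> (nat \<Rightarrow> nat)" where
  "col n A j = (\<lambda>i. if i < n then A i j else 0)"

definition cols :: "nat \<Rightarrow> nat \<Rightarrow> (nat \<Rightarrow> nat \<Rightarrow> nat) \<Rightarrow> (nat \<Rightarrow> nat) set" where
  "cols n m A = col n A ` {..<m}"

text \<open>Binary span: y is a sum (ordinary addition) of a subfamily of X,
  i.e. y = sum of c_x x with c_x in {0,1}.\<close>
definition bspans :: "(nat \<Rightarrow> nat) set \<Rightarrow> (nat \<Rightarrow> nat) \<Rightarrow> bool" where
  "bspans X y \<longleftrightarrow> (\<exists>S\<subseteq>X. y = (\<lambda>i. \<Sum>x\<in>S. x i))"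

definition bspans_set :: "(nat \<Rightarrow> nat) set \<Rightarrow> (nat \<Rightarrow> nat) set \<Rightarrow> bool" where
  "bspans_set X Y \<longleftrightarrow> (\<forall>y\<in>Y. bspans X y)"

definition binary_spanning :: "nat \<Rightarrow> nat \<Rightarrow> (nat \<Rightarrow> nat \<Rightarrow> nat) \<Rightarrow> (nat \<Rightarrow> nat) set \<Rightarrow> bool" where
  "binary_spanning n m A X \<longleftrightarrow> finite X \<and> (\<forall>x\<in>X. binvec n x) \<and> bspans_set X (cols n m A)"

definition binary_base :: "nat \<Rightarrow> nat \<Rightarrow> (nat \<Rightarrow> nat \<Rightarrow> nat) \<Rightarrow> (nat \<Rightarrow> nat) set \<Rightarrow> bool" where
  "binary_base n m A B \<longleftrightarrow> binary_spanning n m A B \<and>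
     (\<forall>X. binary_spanning n m A X \<longrightarrow> card B \<le> card X)"

definition disjoint_in_rows :: "(nat \<Rightarrow> nat) set \<Rightarrow> bool" where
  "disjoint_in_rows B \<longleftrightarrow> (\<forall>u\<in>B. \<forall>v\<in>B. u \<noteq> v \<longrightarrow> (\<forall>i. \<not> (u i = 1 \<and> v i = 1)))"

end

theory Submission
  imports Defs
begin

text \<open>Because U is disjoint in rows, a column spanned by U has, in row i, the coefficient of the
  unique u \<in> U with a 1 in row i. Two rows covered by the same u therefore agree in every column,
  so distinct rows force every u \<in> U to be a unit vector. Conversely, by minimality every b in
  another base B occurs in the decomposition of some column, so each 1 of b lies in a row covered
  by some u \<in> U. Hence b is the sum of the unit vectors of U lying under its support.\<close>

lemma binvec_01:
  assumes "binvec n v"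
  shows "v i = 0 \<or> v i = 1"
  using assms unfolding binvec_def by (cases "i < n") auto

lemma binvec_one_less:
  assumes "binvec n v" and "v i = 1"
  shows "i < n"
  using assms unfolding binvec_def by (metis not_le zero_neq_one)

lemma binary_spanning_col:
  assumes "binary_spanning n m A X" and "j < m"
  obtains S where "S \<subseteq> X" and "col n A j = (\<lambda>i. \<Sum>x\<in>S. x i)"
proof -
  have "col n A j \<in> cols n m A" unfolding cols_def using assms(2) by auto
  then show ?thesis
    using assms(1) that unfolding binary_spanning_def bspans_set_def bspans_def by blast
qed

lemma disjoint_in_rows_sum_at_row:
  assumes "finite U" and "\<forall>x\<in>U. binvec n x" and "disjoint_in_rows U"
    and "S \<subseteq> U" and "u \<in> U" and "u i = 1"
  shows "(\<Sum>x\<in>S. x i) = (if u \<in> S then 1 else 0)"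
proof -
  have "x i = (if x = u then 1 else 0)" if "x \<in> S" for x
  proof (cases "x = u")
    case False
    have "x \<in> U" using that assms(4) by blast
    with False assms(3,5,6) have "x i \<noteq> 1" unfolding disjoint_in_rows_def by blast
    moreover have "x i = 0 \<or> x i = 1" using binvec_01 assms(2) \<open>x \<in> U\<close> by blast
    ultimately show ?thesis using False by simp
  qed (use assms(6) in simp)
  then have "(\<Sum>x\<in>S. x i) = (\<Sum>x\<in>S. if x = u then 1 else 0)"
    by (rule sum.cong[OF refl])
  also have "\<dots> = (if u \<in> S then 1 else 0)"
    using finite_subset[OF assms(4,1)] by simp
  finally show ?thesis .
qed

lemma disjoint_spanning_unit_vector:
  assumes "distinct_rows n m A" and "binary_spanning n m A U" and "disjoint_in_rows U"
    and "u \<in> U" and "u i = 1" and "u i' = 1"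
  shows "i = i'"
proof (rule ccontr)
  assume "i \<noteq> i'"
  have U: "finite U" "\<forall>x\<in>U. binvec n x"
    using assms(2) unfolding binary_spanning_def by auto
  have rows: "i < n" "i' < n" using binvec_one_less U(2) assms(4-6) by auto
  have "A i j = A i' j" if j: "j < m" for j
  proof -
    obtain S where S: "S \<subseteq> U" and eq: "col n A j = (\<lambda>i. \<Sum>x\<in>S. x i)"
      using binary_spanning_col[OF assms(2) j] .
    have "A i j = (\<Sum>x\<in>S. x i)" using fun_cong[OF eq, of i] rows by (simp add: col_def)
    also have "\<dots> = (\<Sum>x\<in>S. x i')"
      using disjoint_in_rows_sum_at_row[OF U assms(3) S assms(4)] assms(5,6) by simp
    also have "\<dots> = A i' j" using fun_cong[OF eq, of i'] rows by (simp add: col_def)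
    finally show ?thesis .
  qed
  then show False using assms(1) rows \<open>i \<noteq> i'\<close> unfolding distinct_rows_def by blast
qed

lemma binary_base_member_used:
  assumes "binary_base n m A B" and "b \<in> B"
  shows "\<exists>j<m. \<exists>S\<subseteq>B. b \<in> S \<and> col n A j = (\<lambda>i. \<Sum>x\<in>S. x i)"
proof (rule ccontr)
  assume unused: "\<not> ?thesis"
  have spanning: "binary_spanning n m A B" and finB: "finite B"
    using assms(1) unfolding binary_base_def binary_spanning_def by auto
  have "binary_spanning n m A (B - {b})"
    unfolding binary_spanning_def bspans_set_def bspans_def
  proof (intro conjI ballI)
    show "finite (B - {b})" using finB by simp
    show "binvec n x" if "x \<in> B - {b}" for x
      using spanning that unfolding binary_spanning_def by auto
    fix y assume "y \<in> cols n m A"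
    then obtain j where j: "j < m" and y: "y = col n A j" unfolding cols_def by auto
    obtain S where "S \<subseteq> B" and "col n A j = (\<lambda>i. \<Sum>x\<in>S. x i)"
      using binary_spanning_col[OF spanning j] .
    with unused j y show "\<exists>S\<subseteq>B - {b}. y = (\<lambda>i. \<Sum>x\<in>S. x i)" by blast
  qed
  then have "card B \<le> card (B - {b})" using assms(1) unfolding binary_base_def by blast
  moreover have "card (B - {b}) < card B" using finB assms(2) by (rule card_Diff1_less)
  ultimately show False by simp
qed

lemma binary_base_support_covered:
  assumes "binary_base n m A B" and "b \<in> B" and "b i = 1"
    and "binary_spanning n m A U"
  shows "\<exists>u\<in>U. u i = 1"
proof -
  obtain j S where j: "j < m" and S: "S \<subseteq> B" "b \<in> S"
    and eq: "col n A j = (\<lambda>i. \<Sum>x\<in>S. x i)"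
    using binary_base_member_used[OF assms(1,2)] by blast
  have "finite S"
    using S(1) assms(1) finite_subset unfolding binary_base_def binary_spanning_def by blast
  then have "1 \<le> col n A j i"
    using member_le_sum[OF S(2), of "\<lambda>x. x i"] fun_cong[OF eq, of i] assms(3) by simp
  moreover obtain S' where S': "S' \<subseteq> U" and eq': "col n A j = (\<lambda>i. \<Sum>x\<in>S'. x i)"
    using binary_spanning_col[OF assms(4) j] .
  ultimately have "(\<Sum>x\<in>S'. x i) \<noteq> 0" by (simp add: fun_cong[OF eq'])
  then obtain u where "u \<in> S'" and "u i \<noteq> 0" by (meson sum.neutral)
  moreover have "binvec n u" using assms(4) S' \<open>u \<in> S'\<close> unfolding binary_spanning_def by auto
  ultimately show ?thesis using S' binvec_01[of n u i] by auto
qed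

lemma bspans_by_unit_vectors:
  assumes "finite U" and "\<forall>x\<in>U. binvec n x" and "disjoint_in_rows U"
    and unit: "\<And>u i i'. u \<in> U \<Longrightarrow> u i = 1 \<Longrightarrow> u i' = 1 \<Longrightarrow> i = i'"
    and "binvec n b" and cover: "\<And>i. b i = 1 \<Longrightarrow> \<exists>u\<in>U. u i = 1"
  shows "bspans U b"
proof -
  define S where "S = {u \<in> U. \<exists>i. b i = 1 \<and> u i = 1}"
  have SU: "S \<subseteq> U" unfolding S_def by auto
  have "b i = (\<Sum>x\<in>S. x i)" for i
  proof (cases "b i = 1")
    case True
    then obtain u where u: "u \<in> U" "u i = 1" using cover by blast
    with True have "u \<in> S" unfolding S_def by auto
    then show ?thesis using disjoint_in_rows_sum_at_row[OF assms(1-3) SU u] True by simp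
  next
    case False
    have "x i = 0" if "x \<in> S" for x
    proof -
      obtain i' where "b i' = 1" "x i' = 1" "x \<in> U" using \<open>x \<in> S\<close> unfolding S_def by auto
      with False unit have "x i \<noteq> 1" by metis
      then show ?thesis using binvec_01 assms(2) \<open>x \<in> U\<close> by blast
    qed
    moreover have "b i = 0" using binvec_01[OF assms(5)] False by blast
    ultimately show ?thesis by (simp add: sum.neutral)
  qed
  then show ?thesis unfolding bspans_def using SU by blast
qed

theorem mainTheorem12:
  fixes n m :: nat and A :: "nat \<Rightarrow> nat \<Rightarrow> nat" and U B :: "(nat \<Rightarrow> nat) set"
  assumes "binary_matrix n m A"
    and "distinct_rows n m A"
    and "binary_base n m A U"
    and "disjoint_in_rows U"
    and "binary_base n m A B"
  shows "bspans_set U B"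
  unfolding bspans_set_def
proof
  fix b assume b: "b \<in> B"
  have U: "binary_spanning n m A U" using assms(3) unfolding binary_base_def by blast
  then have finU: "finite U" and binU: "\<forall>x\<in>U. binvec n x" unfolding binary_spanning_def by auto
  have binb: "binvec n b" using assms(5) b unfolding binary_base_def binary_spanning_def by auto
  show "bspans U b"
  proof (rule bspans_by_unit_vectors[OF finU binU assms(4) _ binb])
    show "i = i'" if "u \<in> U" "u i = 1" "u i' = 1" for u i i'
      using disjoint_spanning_unit_vector[OF assms(2) U assms(4) that] .
    show "\<exists>u\<in>U. u i = 1" if "b i = 1" for i
      using binary_base_support_covered[OF assms(5) b that U] .
  qed
qed

end
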